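(* Let $n\geq 1$. If ${\bf f}[n]=a$, then every valid representation $[k_m\cdots k_0]_F$ of $n$ ends with an even number of $0$s (i.e. the number of trailing zero digits is even). If ${\bf f}[n]=b$, then every valid representation of $n$ ends with an odd number of $0$s.
   Context: Fibonacci numbers: $F_0=0$, $F_1=1$, $F_{m+2}=F_{m+1}+F_m$. Standard Fibonacci words over $\{a,b\}$: $f_{-1}=b$, $f_0=a$, $f_{m+1}=f_mf_{m-1}$ for $m\geq 0$ (so $|f_m|=F_{m+2}$). The Fibonacci infinite word is ${\bf f}=\lim_{m\to\infty} f_m=abaababaab\cdots$, indexed from ${\bf f}[1]=a$; ${\bf f}(0..j]$ denotes its prefix of length $j$. For nonnegative integers $k_m,\dots,k_0$, the notation $[k_m\cdots k_0]_F$ denotes the integer $\sum_{i=0}^m k_iF_{i+2}$. A representation $N=[k_m\cdots k_0]_F$ with all $k_i\geq 0$ is called valid if ${\bf f}(0..N]=f_m^{k_m}f_{m-1}^{k_{m-1}}\cdots f_0^{k_0}$ (concatenation, $u^k$ meaning $k$ copies of $u$). *)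

theory Defs
  imports "HOL-Number_Theory.Fib"
begin

datatype letter = a | b

text \<open>Standard Fibonacci words, shifted by one: fibw m = f_m for m >= 0
  (f_{-1} = b, f_0 = a, f_1 = ab, f_{m+1} = f_m f_{m-1}).\<close>
fun fibw :: "nat \<Rightarrow> letter list" where
  "fibw 0 = [a]"
| "fibw (Suc 0) = [a, b]"
| "fibw (Suc (Suc m)) = fibw (Suc m) @ fibw m"

text \<open>The Fibonacci infinite word, indexed from 1: ffib j = f[j].
  Since |f_j| = F_(j+2) > j and each f_m is a prefix of f_(m+1),
  the j-th letter of f_j is the j-th letter of the limit word.\<close>
definition ffib :: "nat \<Rightarrow> letter" where
  "ffib j = fibw j ! (j - 1)"

definition fprefix :: "nat \<Rightarrow> letter list" where
  "fprefix N = map ffib [1..<N+1]"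

definition fibval :: "nat \<Rightarrow> (nat \<Rightarrow> nat) \<Rightarrow> nat" where
  "fibval m k = (\<Sum>i\<le>m. k i * fib (i + 2))"

definition repword :: "nat \<Rightarrow> (nat \<Rightarrow> nat) \<Rightarrow> letter list" where
  "repword m k = concat (map (\<lambda>i. concat (replicate (k i) (fibw i))) (rev [0..<m+1]))"

definition valid_rep :: "nat \<Rightarrow> nat \<Rightarrow> (nat \<Rightarrow> nat) \<Rightarrow> bool" where
  "valid_rep N m k \<longleftrightarrow> N = fibval m k \<and> fprefix N = repword m k"

text \<open>Number of trailing zero digits k_0 = ... = k_(j-1) = 0, k_j \<noteq> 0
  (only used for representations of N >= 1, where some digit is nonzero).\<close>
definition trailing_zeros :: "nat \<Rightarrow> (nat \<Rightarrow> nat) \<Rightarrow> nat" where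
  "trailing_zeros m k = (LEAST j. j \<le> m \<and> k j \<noteq> 0)"

end

theory Submission
  imports Defs
begin

text \<open>Both sides of a valid representation end with the same letter. On the left this is
  f[n]; on the right, the trailing zero digits contribute empty factors, so the word ends
  with f_j, j the number of trailing zeros, and f_j ends with a or b according to the
  parity of j, because f_(j+2) = f_(j+1) f_j ends like f_j.\<close>

lemma fibw_not_Nil: "fibw j \<noteq> []"
  by (induction j rule: fibw.induct) auto

lemma last_fibw: "last (fibw j) = (if even j then a else b)"
  by (induction j rule: fibw.induct) (auto simp: fibw_not_Nil)

lemma last_concat_replicate:
  assumes "k \<noteq> 0" "xs \<noteq> []"
  shows "concat (replicate k xs) \<noteq> [] \<and> last (concat (replicate k xs)) = last xs"
  using assms by (induction k) (auto simp: last_append)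

lemma last_fprefix: "n \<ge> 1 \<Longrightarrow> last (fprefix n) = ffib n"
  unfolding fprefix_def by (simp add: last_map)

lemma fibval_eq_0: "\<forall>i\<le>m. k i = 0 \<Longrightarrow> fibval m k = 0"
  unfolding fibval_def by simp

lemma trailing_zeros_spec:
  assumes "\<exists>j\<le>m. k j \<noteq> 0"
  shows "trailing_zeros m k \<le> m" "k (trailing_zeros m k) \<noteq> 0"
    and "\<forall>i<trailing_zeros m k. k i = 0"
proof -
  show "trailing_zeros m k \<le> m" "k (trailing_zeros m k) \<noteq> 0"
    using LeastI_ex[of "\<lambda>j. j \<le> m \<and> k j \<noteq> 0"] assms
    unfolding trailing_zeros_def by auto
  then show "\<forall>i<trailing_zeros m k. k i = 0"
    unfolding trailing_zeros_def using not_less_Least by fastforce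
qed

lemma last_repword:
  assumes "j \<le> m" "k j \<noteq> 0" "\<forall>i<j. k i = 0"
  shows "last (repword m k) = last (fibw j)"
proof -
  let ?block = "\<lambda>i. concat (replicate (k i) (fibw i))"
  have "[0..<m+1] = [0..<j] @ j # [Suc j..<m+1]"
    using assms(1) upt_add_eq_append[of 0 j "m + 1 - j"] by (simp add: upt_rec)
  moreover have "concat (map ?block (rev [0..<j])) = []"
    using assms(3) by (auto simp: concat_eq_Nil_conv)
  ultimately have "repword m k = concat (map ?block (rev [Suc j..<m+1])) @ ?block j"
    unfolding repword_def by simp
  then show ?thesis
    using last_concat_replicate[OF assms(2) fibw_not_Nil] by (simp add: last_append)
qed

lemma ffib_valid_rep:
  assumes "n \<ge> 1" "valid_rep n m k"
  shows "ffib n = (if even (trailing_zeros m k) then a else b)"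
proof -
  have "\<exists>j\<le>m. k j \<noteq> 0"
    using assms fibval_eq_0[of m k] unfolding valid_rep_def by (metis not_one_le_zero)
  note tz = trailing_zeros_spec[OF this]
  have "ffib n = last (repword m k)"
    using assms last_fprefix unfolding valid_rep_def by metis
  also have "\<dots> = last (fibw (trailing_zeros m k))"
    using last_repword[OF tz] .
  finally show ?thesis
    unfolding last_fibw .
qed

theorem proposition1:
  fixes n :: nat
  assumes "n \<ge> 1"
  shows "(ffib n = a \<longrightarrow> (\<forall>m k. valid_rep n m k \<longrightarrow> even (trailing_zeros m k)))
       \<and> (ffib n = b \<longrightarrow> (\<forall>m k. valid_rep n m k \<longrightarrow> odd (trailing_zeros m k)))"
  using ffib_valid_rep[OF assms] by (metis letter.distinct(1))

end
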